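(* Let $\gamma\in\{\tfrac12,1,\dots\}$, $\varepsilon\in\{0,\tfrac12\}$ and $j\in\tfrac12\mathbb Z$ with $j-\varepsilon\notin\mathbb Z$. Then on each $J_0$-eigenspace $V_M$ ($M\in\varepsilon+\gamma+\mathbb Z$, spanned by $|\gamma,\mu\rangle\otimes|j,M-\mu\rangle$, $\mu\in\{-\gamma,\dots,\gamma\}$) the Casimir $Q$ has eigenvalues $-(j+\mu)(j+\mu+1)$, $\mu\in\{-\gamma,\dots,\gamma\}$ (counted with algebraic multiplicity), and $Q$ is diagonalisable on $F_\gamma\otimes C^\varepsilon_j$ if and only if $j>\gamma-1$ or $j<-\gamma$.
   Context: Let $\mathfrak{spin}(2,1)_{\mathbb C}$ have basis $J_0,J_+,J_-$ with $[J_0,J_\pm]=\pm J_\pm$, $[J_+,J_-]=-2J_0$, and Casimir $Q=-J_0(J_0-1)+J_+J_-$. Set $\Gamma_\pm(j,m)=\mathrm i\sqrt{j\mp m}\,\sqrt{j\pm m+1}$. A module with basis $\{|j,m\rangle\}$ has action $J_0|j,m\rangle=m|j,m\rangle$, $J_\pm|j,m\rangle=\Gamma_\pm(j,m)|j,m\pm1\rangle$. The continuous series module $C^\varepsilon_j$ has basis $|j,m\rangle$, $m\in\varepsilon+\mathbb Z$. The finite-dimensional module $F_\gamma$ has basis $|\gamma,\mu\rangle$, $\mu\in\{-\gamma,\dots,\gamma\}$. On a tensor product the generators act as $J_0\otimes1+1\otimes J_0$, $J_\pm\otimes1+1\otimes J_\pm$. *)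

theory Defs
  imports Complex_Main "Jordan_Normal_Form.Char_Poly"
begin

text \<open>Vectors of F_gamma (x) C_j^eps are finitely supported functions on pairs (mu, m),
  the pair (mu, m) standing for the basis vector |gamma,mu> (x) |j,m>.\<close>

definition Gam_plus :: "real \<Rightarrow> real \<Rightarrow> complex" where
  "Gam_plus j m = \<i> * csqrt (complex_of_real (j - m)) * csqrt (complex_of_real (j + m + 1))"

definition Gam_minus :: "real \<Rightarrow> real \<Rightarrow> complex" where
  "Gam_minus j m = \<i> * csqrt (complex_of_real (j + m)) * csqrt (complex_of_real (j - m + 1))"

definition J0_op :: "(real \<times> real \<Rightarrow> complex) \<Rightarrow> (real \<times> real \<Rightarrow> complex)" where
  "J0_op v = (\<lambda>(mu, m). complex_of_real (mu + m) * v (mu, m))"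

definition Jp_op :: "real \<Rightarrow> real \<Rightarrow> (real \<times> real \<Rightarrow> complex) \<Rightarrow> (real \<times> real \<Rightarrow> complex)" where
  "Jp_op \<gamma> j v = (\<lambda>(mu, m). Gam_plus \<gamma> (mu - 1) * v (mu - 1, m) + Gam_plus j (m - 1) * v (mu, m - 1))"

definition Jm_op :: "real \<Rightarrow> real \<Rightarrow> (real \<times> real \<Rightarrow> complex) \<Rightarrow> (real \<times> real \<Rightarrow> complex)" where
  "Jm_op \<gamma> j v = (\<lambda>(mu, m). Gam_minus \<gamma> (mu + 1) * v (mu + 1, m) + Gam_minus j (m + 1) * v (mu, m + 1))"

definition Q_op :: "real \<Rightarrow> real \<Rightarrow> (real \<times> real \<Rightarrow> complex) \<Rightarrow> (real \<times> real \<Rightarrow> complex)" where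
  "Q_op \<gamma> j v = (\<lambda>a. - J0_op (\<lambda>b. J0_op v b - v b) a + Jp_op \<gamma> j (Jm_op \<gamma> j v) a)"

definition tens_index :: "real \<Rightarrow> real \<Rightarrow> (real \<times> real) set" where
  "tens_index \<gamma> \<epsilon> = {(mu, m). (\<exists>k::nat. real k \<le> 2 * \<gamma> \<and> mu = - \<gamma> + real k) \<and> m - \<epsilon> \<in> \<int>}"

definition tens_space :: "real \<Rightarrow> real \<Rightarrow> (real \<times> real \<Rightarrow> complex) set" where
  "tens_space \<gamma> \<epsilon> = {v. finite {a. v a \<noteq> 0} \<and> {a. v a \<noteq> 0} \<subseteq> tens_index \<gamma> \<epsilon>}"

definition diagonalisable_on :: "('a \<Rightarrow> complex) set \<Rightarrow> (('a \<Rightarrow> complex) \<Rightarrow> ('a \<Rightarrow> complex)) \<Rightarrow> bool" where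
  "diagonalisable_on S T \<longleftrightarrow>
     (\<forall>v\<in>S. \<exists>ws. (\<forall>w\<in>set ws. w \<in> S \<and> (\<exists>c. T w = (\<lambda>a. c * w a))) \<and> v = (\<lambda>a. \<Sum>w\<leftarrow>ws. w a))"

definition basis_vec :: "'a \<Rightarrow> ('a \<Rightarrow> complex)" where
  "basis_vec b = (\<lambda>a. if a = b then 1 else 0)"

definition fdim :: "real \<Rightarrow> nat" where
  "fdim \<gamma> = nat \<lfloor>2 * \<gamma>\<rfloor> + 1"

definition wt :: "real \<Rightarrow> nat \<Rightarrow> real" where
  "wt \<gamma> k = - \<gamma> + real k"

definition Q_mat_VM :: "real \<Rightarrow> real \<Rightarrow> real \<Rightarrow> complex mat" where
  "Q_mat_VM \<gamma> j M = mat (fdim \<gamma>) (fdim \<gamma>)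
     (\<lambda>(k, l). Q_op \<gamma> j (basis_vec (wt \<gamma> l, M - wt \<gamma> l)) (wt \<gamma> k, M - wt \<gamma> k))"

end

theory Submission
  imports Defs
begin

text \<open>
  The Casimir \<open>Q\<close> commutes with \<open>J\<^sub>0\<close>, and on the weight space \<open>V\<^sub>M\<close> its matrix in the
  basis \<open>|\<gamma>,\<mu>\<rangle> \<otimes> |j,M-\<mu>\<rangle>\<close> is tridiagonal, so its characteristic polynomial is a
  continuant whose entries are polynomials in \<open>M\<close>. As \<open>Q\<close> also commutes with \<open>J\<^sub>+\<close>, and
  \<open>J\<^sub>+\<close> maps \<open>V\<^sub>M\<close> bijectively onto \<open>V\<^sub>M\<^sub>+\<^sub>1\<close> once \<open>M\<close> is large, this polynomial in \<open>M\<close>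
  is eventually periodic and hence constant. At \<open>M = \<gamma> - 1 - j\<close> the matrix is block triangular:
  it splits off the eigenvalue \<open>-(j-\<gamma>)(j-\<gamma>+1)\<close> and leaves the matrix for
  \<open>(\<gamma> - 1/2, j + 1/2)\<close>, so induction on \<open>2\<gamma>\<close> yields the eigenvalues \<open>-(j+\<mu>)(j+\<mu>+1)\<close>.

  Two of these coincide iff two distinct weights satisfy \<open>\<mu> + \<mu>' = -2j - 1\<close>, which happens
  exactly when \<open>-\<gamma> \<le> j \<le> \<gamma> - 1\<close>. If they are distinct, \<open>Q\<close> is diagonalisable on every
  \<open>V\<^sub>M\<close>, hence on the whole module. Otherwise take the lowest basis vector of \<open>V\<^sub>\<epsilon>\<^sub>+\<^sub>\<gamma>\<close>:
  every factor \<open>Q - c\<close> extends its support by one weight with coefficient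
  \<open>\<Gamma>\<^sub>+\<Gamma>\<^sub>- \<noteq> 0\<close> (here \<open>j - \<epsilon> \<notin> \<int>\<close> is used), so the product of \<open>Q - c\<close> over the
  fewer than \<open>2\<gamma> + 1\<close> distinct eigenvalues does not annihilate it, although it annihilates
  every eigenvector.
\<close>

fun continuant :: "(nat \<Rightarrow> 'a::comm_ring_1) \<Rightarrow> (nat \<Rightarrow> 'a) \<Rightarrow> nat \<Rightarrow> 'a" where
  "continuant a p 0 = 1"
| "continuant a p (Suc 0) = a 0"
| "continuant a p (Suc (Suc n)) = a (Suc n) * continuant a p (Suc n) - p n * continuant a p n"

lemma continuant_cong:
  "(\<And>k. k < n \<Longrightarrow> a k = a' k) \<Longrightarrow> (\<And>k. Suc k < n \<Longrightarrow> p k = p' k) \<Longrightarrow>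
    continuant a p n = continuant a' p' n"
  by (induction a p n rule: continuant.induct) auto

lemma poly_continuant:
  "poly (continuant a p n) z = continuant (\<lambda>k. poly (a k) z) (\<lambda>k. poly (p k) z) n"
  by (induction a p n rule: continuant.induct) auto

lemma det_tridiagonal_Suc_Suc:
  fixes f :: "nat \<times> nat \<Rightarrow> 'a::comm_ring_1" and k :: nat
  defines "n \<equiv> Suc (Suc k)"
  assumes tri: "\<And>i l. i < n \<Longrightarrow> l < n \<Longrightarrow> Suc i < l \<or> Suc l < i \<Longrightarrow> f (i, l) = 0"
  shows "det (mat n n f) =
    f (Suc k, Suc k) * det (mat (Suc k) (Suc k) f) - f (k, Suc k) * f (Suc k, k) * det (mat k k f)"
proof -
  let ?B = "mat n n f"
  define C where "C = mat_delete ?B (Suc k) k"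
  have B: "?B \<in> carrier_mat n n" by simp
  have C: "C \<in> carrier_mat (Suc k) (Suc k)"
    unfolding C_def using mat_delete_carrier[OF B] by (simp add: n_def)
  have C_entry: "C $$ (i, l) = f (i, if l < k then l else Suc l)" if "i < Suc k" "l < Suc k" for i l
    using that unfolding C_def mat_delete_def by (auto simp: n_def)
  have "mat_delete C k k = mat k k f"
    by (rule eq_matI) (use C in \<open>auto simp: mat_delete_def C_entry\<close>)
  then have cof_C: "cofactor C k k = det (mat k k f)"
    by (simp add: cofactor_def)
  have "det C = (\<Sum>i<Suc k. C $$ (i, k) * cofactor C i k)"
    by (rule laplace_expansion_column[OF C]) simp
  also have "\<dots> = C $$ (k, k) * cofactor C k k"
    using tri by (simp add: C_entry n_def)
  finally have det_C: "det C = f (k, Suc k) * det (mat k k f)"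
    by (simp add: C_entry cof_C)
  have "mat_delete ?B (Suc k) (Suc k) = mat (Suc k) (Suc k) f"
    by (rule eq_matI) (auto simp: mat_delete_def n_def)
  then have cof_diag: "cofactor ?B (Suc k) (Suc k) = det (mat (Suc k) (Suc k) f)"
    by (simp add: cofactor_def)
  have cof_sub: "cofactor ?B (Suc k) k = - det C"
    by (simp add: cofactor_def C_def)
  have "det ?B = (\<Sum>l<n. ?B $$ (Suc k, l) * cofactor ?B (Suc k) l)"
    by (rule laplace_expansion_row[OF B]) (simp add: n_def)
  also have "\<dots> = f (Suc k, k) * cofactor ?B (Suc k) k + f (Suc k, Suc k) * cofactor ?B (Suc k) (Suc k)"
    using tri by (simp add: n_def)
  finally show ?thesis
    unfolding cof_diag cof_sub det_C by (simp add: algebra_simps)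
qed

lemma det_tridiagonal:
  fixes f :: "nat \<times> nat \<Rightarrow> 'a::comm_ring_1"
  assumes "\<And>i l. i < n \<Longrightarrow> l < n \<Longrightarrow> Suc i < l \<or> Suc l < i \<Longrightarrow> f (i, l) = 0"
  shows "det (mat n n f) = continuant (\<lambda>k. f (k, k)) (\<lambda>k. f (k, Suc k) * f (Suc k, k)) n"
  using assms
proof (induction n rule: induct_nat_012)
  case (ge2 k)
  then show ?case
    by (simp add: det_tridiagonal_Suc_Suc)
qed (simp_all add: det_def)

lemma poly_char_poly_tridiagonal:
  fixes A :: "'a::comm_ring_1 mat"
  assumes A: "A \<in> carrier_mat n n"
    and tri: "\<And>i l. i < n \<Longrightarrow> l < n \<Longrightarrow> Suc i < l \<or> Suc l < i \<Longrightarrow> A $$ (i, l) = 0"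
  shows "poly (char_poly A) x = continuant (\<lambda>k. x - A $$ (k, k)) (\<lambda>k. A $$ (k, Suc k) * A $$ (Suc k, k)) n"
proof -
  define f where "f = (\<lambda>(i, l). (if i = l then [:0, 1:] else 0) + [:- A $$ (i, l):])"
  have "char_poly_matrix A = mat n n f"
    using A by (intro eq_matI) (auto simp: char_poly_matrix_def f_def)
  then have "char_poly A = det (mat n n f)"
    unfolding char_poly_def by simp
  also have "\<dots> = continuant (\<lambda>k. f (k, k)) (\<lambda>k. f (k, Suc k) * f (Suc k, k)) n"
    by (rule det_tridiagonal) (auto simp: f_def tri)
  finally show ?thesis
    by (simp add: f_def poly_continuant mult.commute)
qed

lemma mat_eqI_mult_vec:
  fixes A B :: "'a::semiring_1 mat"
  assumes "A \<in> carrier_mat n m" "B \<in> carrier_mat n m" "\<And>u. u \<in> carrier_vec m \<Longrightarrow> A *\<^sub>v u = B *\<^sub>v u"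
  shows "A = B"
proof (rule eq_matI)
  fix k l assume "k < dim_row B" "l < dim_col B"
  have "A *\<^sub>v unit_vec m l = B *\<^sub>v unit_vec m l"
    by (rule assms(3)) simp
  then have "(A *\<^sub>v unit_vec m l) $ k = (B *\<^sub>v unit_vec m l) $ k"
    by simp
  with \<open>k < dim_row B\<close> \<open>l < dim_col B\<close> assms(1,2) show "A $$ (k, l) = B $$ (k, l)"
    by simp
qed (use assms(1,2) in auto)

lemma char_poly_eq_if_intertwined:
  fixes A B P :: "'a::field mat"
  assumes carrier: "A \<in> carrier_mat n n" "B \<in> carrier_mat n n" "P \<in> carrier_mat n n"
    and "det P \<noteq> 0" and AP: "A * P = P * B"
  shows "char_poly A = char_poly B"
proof -
  obtain P' where P': "P' \<in> carrier_mat n n" "P' * P = 1\<^sub>m n" "P * P' = 1\<^sub>m n"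
    using det_non_zero_imp_unit[OF carrier(3) \<open>det P \<noteq> 0\<close>]
    unfolding Units_def ring_mat_def by auto
  have "A = A * (P * P')"
    using P' carrier by simp
  also have "\<dots> = (A * P) * P'"
    using P' carrier by (simp add: assoc_mult_mat[of A n n P n P' n])
  also have "\<dots> = P * B * P'"
    unfolding AP ..
  finally have "similar_mat A B"
    using P' carrier by (intro similar_matI[where n = n and P = P and Q = P']) auto
  then show ?thesis
    by (rule char_poly_similar)
qed

lemma poly_eq_const_if_periodic:
  fixes p :: "'a::{idom, ring_char_0} poly"
  assumes periodic: "\<And>n. poly p (c + of_nat n) = poly p c"
  shows "poly p z = poly p c"
proof -
  have "p - [:poly p c:] = 0"
  proof (rule ccontr)
    assume "p - [:poly p c:] \<noteq> 0"
    then have "finite {z. poly (p - [:poly p c:]) z = 0}"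
      by (rule poly_roots_finite)
    moreover have "range (\<lambda>n. c + of_nat n) \<subseteq> {z. poly (p - [:poly p c:]) z = 0}"
      using periodic by auto
    moreover have "infinite (range (\<lambda>n::nat. c + of_nat n))"
      by (rule range_inj_infinite) (auto simp: inj_def)
    ultimately show False
      using finite_subset by blast
  qed
  then have "poly (p - [:poly p c:]) z = 0"
    by simp
  then show ?thesis
    by simp
qed

lemma length_remdups_map_upt_less:
  assumes "\<not> inj_on f {..<n}"
  shows "length (remdups (map f [0..<n])) < n"
proof -
  have "length (remdups (map f [0..<n])) = card (f ` {..<n})"
    unfolding length_remdups_card_conv by (simp add: atLeast0LessThan)
  also have "\<dots> < n"
    using assms card_image_le[of "{..<n}" f] inj_on_iff_eq_card[of "{..<n}" f] by simp
  finally show ?thesis .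
qed

section \<open>Linear operators on spaces of functions\<close>

definition pointwise_linear :: "(('a \<Rightarrow> complex) \<Rightarrow> ('b \<Rightarrow> complex)) \<Rightarrow> bool" where
  "pointwise_linear T \<longleftrightarrow>
     (\<forall>(I :: nat set) c f. T (\<lambda>a. \<Sum>i\<in>I. c i * f i a) = (\<lambda>b. \<Sum>i\<in>I. c i * T (f i) b))"

lemma pointwise_linearD:
  fixes I :: "nat set"
  shows "pointwise_linear T \<Longrightarrow> T (\<lambda>a. \<Sum>i\<in>I. c i * f i a) = (\<lambda>b. \<Sum>i\<in>I. c i * T (f i) b)"
  unfolding pointwise_linear_def by blast

lemma pointwise_linear_scale:
  assumes "pointwise_linear T"
  shows "T (\<lambda>a. c * f a) = (\<lambda>b. c * T f b)"
  using pointwise_linearD[OF assms, where I = "{0}" and c = "\<lambda>_. c" and f = "\<lambda>_. f"] by simp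

lemma pointwise_linear_zero: "pointwise_linear T \<Longrightarrow> T (\<lambda>_. 0) = (\<lambda>_. 0)"
  using pointwise_linearD[where I = "{}"] by simp

lemma eigenfunctions_lin_indep:
  fixes w :: "nat \<Rightarrow> 'a \<Rightarrow> complex"
  assumes lin: "pointwise_linear T"
    and eig: "\<And>k. k < r \<Longrightarrow> T (w k) = (\<lambda>a. lam k * w k a)"
    and nz: "\<And>k. k < r \<Longrightarrow> w k \<noteq> (\<lambda>_. 0)"
    and inj: "inj_on lam {..<r}"
    and sum0: "(\<lambda>a. \<Sum>k<r. c k * w k a) = (\<lambda>_. 0)"
  shows "k < r \<Longrightarrow> c k = 0"
  using eig nz inj sum0
proof (induction r arbitrary: c k)
  case (Suc r)
  have "T (\<lambda>a. \<Sum>k<Suc r. c k * w k a) = (\<lambda>b. \<Sum>k<Suc r. c k * T (w k) b)"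
    by (rule pointwise_linearD[OF lin])
  also have "\<dots> = (\<lambda>a. \<Sum>k<Suc r. c k * lam k * w k a)"
    using Suc.prems by (intro ext sum.cong) (simp_all add: mult.assoc)
  finally have applied: "(\<lambda>a. \<Sum>k<Suc r. c k * lam k * w k a) = (\<lambda>_. 0)"
    unfolding Suc.prems(5) pointwise_linear_zero[OF lin] ..
  have "(\<lambda>a. \<Sum>k<r. (c k * (lam k - lam r)) * w k a) = (\<lambda>_. 0)"
  proof
    fix a
    have "(\<Sum>k<r. (c k * (lam k - lam r)) * w k a) =
        (\<Sum>k<Suc r. c k * lam k * w k a) - lam r * (\<Sum>k<Suc r. c k * w k a)"
      by (simp add: sum_distrib_left sum_subtractf[symmetric] algebra_simps)
    then show "(\<Sum>k<r. (c k * (lam k - lam r)) * w k a) = 0"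
      using fun_cong[OF applied, of a] fun_cong[OF Suc.prems(5), of a] by simp
  qed
  then have small: "c i * (lam i - lam r) = 0" if "i < r" for i
    using Suc.prems(2-4) that by (intro Suc.IH) (auto intro: inj_on_subset)
  have lower: "c i = 0" if "i < r" for i
    using small[OF that] that Suc.prems(4) by (auto simp: inj_on_def)
  moreover obtain a where "w r a \<noteq> 0"
    using Suc.prems(3)[of r] by auto
  moreover have "(\<Sum>k<Suc r. c k * w k a) = 0"
    using fun_cong[OF Suc.prems(5), of a] by simp
  ultimately have "c r = 0"
    by simp
  with lower show ?case
    using \<open>k < Suc r\<close> by (auto simp: less_Suc_eq)
qed simp

definition eigen_decomposable ::
    "('a \<Rightarrow> complex) set \<Rightarrow> (('a \<Rightarrow> complex) \<Rightarrow> ('a \<Rightarrow> complex)) \<Rightarrow> ('a \<Rightarrow> complex) \<Rightarrow> bool" where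
  "eigen_decomposable S T f \<longleftrightarrow>
     (\<exists>ws. (\<forall>w\<in>set ws. w \<in> S \<and> (\<exists>c. T w = (\<lambda>a. c * w a))) \<and> f = (\<lambda>a. \<Sum>w\<leftarrow>ws. w a))"

lemma diagonalisable_on_iff: "diagonalisable_on S T \<longleftrightarrow> (\<forall>v\<in>S. eigen_decomposable S T v)"
  unfolding diagonalisable_on_def eigen_decomposable_def ..

lemma eigen_decomposable_eigenvector:
  "w \<in> S \<Longrightarrow> T w = (\<lambda>a. c * w a) \<Longrightarrow> eigen_decomposable S T w"
  unfolding eigen_decomposable_def by (rule exI[of _ "[w]"]) auto

lemma eigen_decomposable_sum:
  assumes "finite I" "\<And>i. i \<in> I \<Longrightarrow> eigen_decomposable S T (f i)"
  shows "eigen_decomposable S T (\<lambda>a. \<Sum>i\<in>I. f i a)"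
  using assms
proof (induction I rule: finite_induct)
  case empty
  show ?case
    unfolding eigen_decomposable_def by (rule exI[of _ "[]"]) simp
next
  case (insert i I)
  obtain ws where ws: "\<forall>w\<in>set ws. w \<in> S \<and> (\<exists>c. T w = (\<lambda>a. c * w a))" "f i = (\<lambda>a. \<Sum>w\<leftarrow>ws. w a)"
    using insert.prems[of i] unfolding eigen_decomposable_def by auto
  obtain vs where vs: "\<forall>w\<in>set vs. w \<in> S \<and> (\<exists>c. T w = (\<lambda>a. c * w a))"
      "(\<lambda>a. \<Sum>i\<in>I. f i a) = (\<lambda>a. \<Sum>w\<leftarrow>vs. w a)"
    using insert.IH insert.prems unfolding eigen_decomposable_def by auto
  have "(\<lambda>a. \<Sum>i\<in>insert i I. f i a) = (\<lambda>a. \<Sum>w\<leftarrow>ws @ vs. w a)"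
    using insert.hyps ws(2) fun_cong[OF vs(2)] by (simp add: fun_eq_iff)
  with ws(1) vs(1) show ?case
    unfolding eigen_decomposable_def by (intro exI[of _ "ws @ vs"]) auto
qed

section \<open>The Casimir operator on the tensor product\<close>

lemma Gam_plus_mult_Gam_minus:
  "Gam_plus g (x - 1) * Gam_minus g x = - complex_of_real ((g - x + 1) * (g + x))"
proof -
  have sq: "csqrt z * csqrt z = z" for z
    using power2_csqrt[of z] by (simp add: power2_eq_square)
  have "Gam_plus g (x - 1) * Gam_minus g x =
      (\<i> * \<i>) * (csqrt (of_real (g - x + 1)) * csqrt (of_real (g - x + 1)))
        * (csqrt (of_real (g + x)) * csqrt (of_real (g + x)))"
    unfolding Gam_plus_def Gam_minus_def by (simp add: algebra_simps)
  then show ?thesis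
    unfolding sq by (simp add: algebra_simps)
qed

lemma Gam_plus_mult_Gam_minus':
  "Gam_plus g x * Gam_minus g (x + 1) = - complex_of_real ((g - x) * (g + x + 1))"
  using Gam_plus_mult_Gam_minus[of g "x + 1"] by simp

lemma Gam_plus_top [simp]: "Gam_plus g g = 0"
  by (simp add: Gam_plus_def)

lemma Gam_minus_bottom [simp]: "Gam_minus g (- g) = 0"
  by (simp add: Gam_minus_def)

definition casimir_diag :: "real \<Rightarrow> real \<Rightarrow> real \<Rightarrow> real \<Rightarrow> real" where
  "casimir_diag g j mu m = - ((mu + m) * (mu + m - 1)) - (g - mu + 1) * (g + mu) - (j - m + 1) * (j + m)"

lemma Jp_op_apply [simp]:
  "Jp_op g j v (mu, m) = Gam_plus g (mu - 1) * v (mu - 1, m) + Gam_plus j (m - 1) * v (mu, m - 1)"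
  unfolding Jp_op_def by simp

lemma Q_op_apply:
  "Q_op g j v (mu, m) = complex_of_real (casimir_diag g j mu m) * v (mu, m)
     + Gam_plus g (mu - 1) * Gam_minus j (m + 1) * v (mu - 1, m + 1)
     + Gam_plus j (m - 1) * Gam_minus g (mu + 1) * v (mu + 1, m - 1)"
proof -
  have "Q_op g j v (mu, m) =
      (- (of_real (mu + m) * (of_real (mu + m) - 1)) + Gam_plus g (mu - 1) * Gam_minus g mu
        + Gam_plus j (m - 1) * Gam_minus j m) * v (mu, m)
     + Gam_plus g (mu - 1) * Gam_minus j (m + 1) * v (mu - 1, m + 1)
     + Gam_plus j (m - 1) * Gam_minus g (mu + 1) * v (mu + 1, m - 1)"
    unfolding Q_op_def J0_op_def Jp_op_def Jm_op_def by (simp add: algebra_simps)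
  then show ?thesis
    unfolding Gam_plus_mult_Gam_minus casimir_diag_def by simp
qed

lemma Q_op_Jp_op_commute: "Q_op g j (Jp_op g j v) = Jp_op g j (Q_op g j v)"
proof
  fix a :: "real \<times> real"
  obtain mu m where a: "a = (mu, m)" by (cases a)
  let ?D = "\<lambda>mu m. complex_of_real (casimir_diag g j mu m)"
  define a1 where "a1 = Gam_plus g (mu - 1)"
  define a2 where "a2 = Gam_plus g (mu - 2)"
  define a3 where "a3 = Gam_plus g mu"
  define b1 where "b1 = Gam_minus g mu"
  define b2 where "b2 = Gam_minus g (mu + 1)"
  define c1 where "c1 = Gam_plus j (m - 1)"
  define c2 where "c2 = Gam_plus j (m - 2)"
  define c3 where "c3 = Gam_plus j m"
  define e1 where "e1 = Gam_minus j m"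
  define e2 where "e2 = Gam_minus j (m + 1)"
  have LHS: "Q_op g j (Jp_op g j v) a = ?D mu m * (a1 * v (mu - 1, m) + c1 * v (mu, m - 1))
      + a1 * e2 * (a2 * v (mu - 2, m + 1) + c3 * v (mu - 1, m))
      + c1 * b2 * (a3 * v (mu, m - 1) + c2 * v (mu + 1, m - 2))"
    unfolding a Q_op_apply Jp_op_apply a1_def a2_def a3_def b2_def c1_def c2_def c3_def e2_def
    by (simp add: diff_diff_eq)
  have RHS: "Jp_op g j (Q_op g j v) a =
      a1 * (?D (mu - 1) m * v (mu - 1, m) + a2 * e2 * v (mu - 2, m + 1) + c1 * b1 * v (mu, m - 1))
      + c1 * (?D mu (m - 1) * v (mu, m - 1) + a1 * e1 * v (mu - 1, m) + c2 * b2 * v (mu + 1, m - 2))"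
    unfolding a Q_op_apply Jp_op_apply a1_def a2_def b1_def b2_def c1_def c2_def e1_def e2_def
    by (simp add: diff_diff_eq)
  have "?D mu m - ?D (mu - 1) m + c3 * e2 - c1 * e1 = 0"
    unfolding c1_def c3_def e1_def e2_def Gam_plus_mult_Gam_minus Gam_plus_mult_Gam_minus'
    by (simp add: casimir_diag_def algebra_simps)
  moreover have "?D mu m - ?D mu (m - 1) + a3 * b2 - a1 * b1 = 0"
    unfolding a1_def a3_def b1_def b2_def Gam_plus_mult_Gam_minus Gam_plus_mult_Gam_minus'
    by (simp add: casimir_diag_def algebra_simps)
  moreover have "Q_op g j (Jp_op g j v) a - Jp_op g j (Q_op g j v) a =
      v (mu - 1, m) * a1 * (?D mu m - ?D (mu - 1) m + c3 * e2 - c1 * e1)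
      + v (mu, m - 1) * c1 * (?D mu m - ?D mu (m - 1) + a3 * b2 - a1 * b1)"
    unfolding LHS RHS by (simp add: algebra_simps)
  ultimately show "Q_op g j (Jp_op g j v) a = Jp_op g j (Q_op g j v) a"
    by simp
qed

lemma pointwise_linear_Q_op: "pointwise_linear (Q_op g j)"
  unfolding pointwise_linear_def
  by (auto simp: fun_eq_iff Q_op_apply sum_distrib_left sum.distrib algebra_simps)

lemma pointwise_linear_Jp_op: "pointwise_linear (Jp_op g j)"
  unfolding pointwise_linear_def
  by (auto simp: fun_eq_iff sum_distrib_left sum.distrib algebra_simps)

section \<open>The weight spaces\<close>

lemma wt_Suc: "wt g (Suc k) = wt g k + 1"
  unfolding wt_def by simp

lemma wt_eq_iff [simp]: "wt g k = wt g l \<longleftrightarrow> k = l"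
  unfolding wt_def by simp

lemma wt_minus_one_eq_iff [simp]: "wt g k - 1 = wt g l \<longleftrightarrow> k = Suc l"
  unfolding wt_def by auto

lemma wt_plus_one_eq_iff [simp]: "wt g k + 1 = wt g l \<longleftrightarrow> l = Suc k"
  unfolding wt_def by auto

lemma wt_top: "wt (real d / 2) d = real d / 2"
  unfolding wt_def by simp

lemma fdim_half [simp]: "fdim (real d / 2) = Suc d"
  unfolding fdim_def by simp

text \<open>\<open>basis_vec (vm_point g M l)\<close> is the basis vector \<open>|\<gamma>,\<mu>\<^sub>l\<rangle> \<otimes> |j,M-\<mu>\<^sub>l\<rangle>\<close> of \<open>V\<^sub>M\<close>,
  where \<open>\<mu>\<^sub>l = wt g l\<close>.\<close>

definition vm_point :: "real \<Rightarrow> real \<Rightarrow> nat \<Rightarrow> real \<times> real" where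
  "vm_point g M l = (wt g l, M - wt g l)"

lemma vm_point_eq_iff [simp]: "vm_point g M k = vm_point g M l \<longleftrightarrow> k = l"
  unfolding vm_point_def by simp

lemma basis_vec_vm_point:
  "basis_vec (vm_point g M l) (mu, m) = (if mu = wt g l \<and> mu + m = M then 1 else 0)"
  unfolding basis_vec_def vm_point_def by auto

lemma vm_point_shift_iff:
  "(mu - 1, m + 1) = vm_point g M l \<longleftrightarrow> (mu, m) = vm_point g M (Suc l)"
  "(mu + 1, m - 1) = vm_point g M (Suc l) \<longleftrightarrow> (mu, m) = vm_point g M l"
  "(mu - 1, m) = vm_point g M l \<longleftrightarrow> (mu, m) = vm_point g (M + 1) (Suc l)"
  "(mu, m - 1) = vm_point g M l \<longleftrightarrow> (mu, m) = vm_point g (M + 1) l"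
  by (auto simp: vm_point_def wt_Suc)

definition supported_first :: "real \<Rightarrow> real \<Rightarrow> nat \<Rightarrow> (real \<times> real \<Rightarrow> complex) \<Rightarrow> bool" where
  "supported_first g M n f \<longleftrightarrow> (\<forall>a. f a \<noteq> 0 \<longrightarrow> (\<exists>l<n. a = vm_point g M l))"

lemma supported_firstD: "supported_first g M n f \<Longrightarrow> (\<And>l. l < n \<Longrightarrow> a \<noteq> vm_point g M l) \<Longrightarrow> f a = 0"
  unfolding supported_first_def by blast

lemma supported_first_basis_vec: "l < n \<Longrightarrow> supported_first g M n (basis_vec (vm_point g M l))"
  unfolding supported_first_def basis_vec_def by auto

lemma supported_first_Suc:
  "supported_first g M (Suc n) f \<Longrightarrow> f (vm_point g M n) = 0 \<Longrightarrow> supported_first g M n f"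
  unfolding supported_first_def by (metis less_SucE)

lemma supported_first_mono: "supported_first g M n f \<Longrightarrow> n \<le> n' \<Longrightarrow> supported_first g M n' f"
  unfolding supported_first_def using order.strict_trans2 by blast

lemma supported_first_scale: "supported_first g M n f \<Longrightarrow> supported_first g M n (\<lambda>a. c * f a)"
  unfolding supported_first_def by simp

lemma supported_first_diff:
  assumes "supported_first g M n f" "supported_first g M n h"
  shows "supported_first g M n (\<lambda>a. f a - c * h a)"
  unfolding supported_first_def
proof (intro allI impI)
  fix a assume "f a - c * h a \<noteq> 0"
  then have "f a \<noteq> 0 \<or> h a \<noteq> 0"
    by auto
  then show "\<exists>l<n. a = vm_point g M l"
    using assms unfolding supported_first_def by blast
qed

lemma supported_first_Q_op:
  assumes f: "supported_first g M n f"
  shows "supported_first g M (Suc n) (Q_op g j f)"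
  unfolding supported_first_def
proof (intro allI impI)
  fix a assume nz: "Q_op g j f a \<noteq> 0"
  obtain mu m where a: "a = (mu, m)" by (cases a)
  show "\<exists>l<Suc n. a = vm_point g M l"
  proof (rule ccontr)
    assume "\<not> (\<exists>l<Suc n. a = vm_point g M l)"
    then have off: "a \<noteq> vm_point g M l" if "l < Suc n" for l
      using that by blast
    have "(mu, m) \<noteq> vm_point g M l" "(mu - 1, m + 1) \<noteq> vm_point g M l" if "l < n" for l
      using off[of l] off[of "Suc l"] that by (simp_all add: a vm_point_shift_iff(1))
    then have "f (mu, m) = 0" "f (mu - 1, m + 1) = 0"
      by (auto intro: supported_firstD[OF f])
    moreover have "Gam_minus g (mu + 1) * f (mu + 1, m - 1) = 0"
    proof (cases "mu + 1 = - g")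
      case False
      have "(mu + 1, m - 1) \<noteq> vm_point g M l" if "l < n" for l
      proof (cases l)
        case 0
        with False show ?thesis by (simp add: vm_point_def wt_def)
      next
        case (Suc k)
        with off[of k] that show ?thesis by (simp add: a vm_point_shift_iff(2))
      qed
      then show ?thesis
        by (simp add: supported_firstD[OF f])
    qed simp
    ultimately have "Q_op g j f a = 0"
      unfolding a Q_op_apply by (simp add: mult.assoc)
    with nz show False ..
  qed
qed

lemma Q_op_at_next:
  assumes f: "supported_first g M (Suc r) f"
  shows "Q_op g j f (vm_point g M (Suc r)) = Gam_plus g (wt g r) * Gam_minus j (M - wt g r) * f (vm_point g M r)"
proof -
  define w where "w = wt g r"
  have next_pt: "vm_point g M (Suc r) = (w + 1, M - (w + 1))"
    by (simp add: vm_point_def w_def wt_Suc)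
  have "f (w + 1, M - (w + 1)) = 0"
    unfolding next_pt[symmetric] by (rule supported_firstD[OF f]) simp
  moreover have "f (w + 1 + 1, M - (w + 1) - 1) = 0"
    by (rule supported_firstD[OF f]) (simp add: vm_point_def w_def wt_def)
  moreover have "(w + 1 - 1, M - (w + 1) + 1) = vm_point g M r"
    by (simp add: vm_point_def w_def)
  ultimately show ?thesis
    unfolding next_pt Q_op_apply by (simp add: w_def)
qed

lemma supported_first_Jp_op:
  assumes f: "supported_first g M n f"
  shows "supported_first g (M + 1) (Suc n) (Jp_op g j f)"
  unfolding supported_first_def
proof (intro allI impI)
  fix a assume nz: "Jp_op g j f a \<noteq> 0"
  obtain mu m where a: "a = (mu, m)" by (cases a)
  show "\<exists>l<Suc n. a = vm_point g (M + 1) l"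
  proof (rule ccontr)
    assume "\<not> (\<exists>l<Suc n. a = vm_point g (M + 1) l)"
    then have off: "a \<noteq> vm_point g (M + 1) l" if "l < Suc n" for l
      using that by blast
    have "(mu - 1, m) \<noteq> vm_point g M l" "(mu, m - 1) \<noteq> vm_point g M l" if "l < n" for l
      using off[of l] off[of "Suc l"] that by (simp_all add: a vm_point_shift_iff(3,4))
    then have "f (mu - 1, m) = 0" "f (mu, m - 1) = 0"
      by (auto intro: supported_firstD[OF f])
    then have "Jp_op g j f a = 0"
      unfolding a by simp
    with nz show False ..
  qed
qed

lemma Jp_op_at_next:
  assumes f: "supported_first g M (Suc r) f"
  shows "Jp_op g j f (vm_point g (M + 1) (Suc r)) = Gam_plus g (wt g r) * f (vm_point g M r)"
proof -
  define w where "w = wt g r"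
  have next_pt: "vm_point g (M + 1) (Suc r) = (w + 1, M - w)"
    by (simp add: vm_point_def w_def wt_Suc)
  have "f (w + 1, M - w - 1) = 0"
    by (rule supported_firstD[OF f]) (simp add: vm_point_def w_def wt_def)
  moreover have "(w + 1 - 1, M - w) = vm_point g M r"
    by (simp add: vm_point_def w_def)
  ultimately show ?thesis
    unfolding next_pt Jp_op_apply by (simp add: w_def)
qed

lemma Q_op_weight_space:
  assumes "supported_first (real d / 2) M (Suc d) f"
  shows "supported_first (real d / 2) M (Suc d) (Q_op (real d / 2) j f)"
proof (rule supported_first_Suc)
  show "supported_first (real d / 2) M (Suc (Suc d)) (Q_op (real d / 2) j f)"
    using assms by (rule supported_first_Q_op)
  show "Q_op (real d / 2) j f (vm_point (real d / 2) M (Suc d)) = 0"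
    unfolding Q_op_at_next[OF assms] wt_top by simp
qed

lemma Jp_op_weight_space:
  assumes "supported_first (real d / 2) M (Suc d) f"
  shows "supported_first (real d / 2) (M + 1) (Suc d) (Jp_op (real d / 2) j f)"
proof (rule supported_first_Suc)
  show "supported_first (real d / 2) (M + 1) (Suc (Suc d)) (Jp_op (real d / 2) j f)"
    using assms by (rule supported_first_Jp_op)
  show "Jp_op (real d / 2) j f (vm_point (real d / 2) (M + 1) (Suc d)) = 0"
    unfolding Jp_op_at_next[OF assms] wt_top by simp
qed

definition restrict_J0 :: "real \<Rightarrow> (real \<times> real \<Rightarrow> complex) \<Rightarrow> (real \<times> real \<Rightarrow> complex)" where
  "restrict_J0 M f = (\<lambda>a. if fst a + snd a = M then f a else 0)"

lemma Q_op_restrict_J0: "Q_op g j (restrict_J0 M f) = restrict_J0 M (Q_op g j f)"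
  by (auto simp: fun_eq_iff restrict_J0_def Q_op_apply)

lemma vm_point_in_tens_index:
  assumes "M - e - real d / 2 \<in> \<int>" "l < Suc d"
  shows "vm_point (real d / 2) M l \<in> tens_index (real d / 2) e"
proof -
  obtain z where z: "M - e - real d / 2 = of_int z"
    using assms(1) Ints_cases by blast
  have "M - wt (real d / 2) l - e = of_int (z + int d - int l)"
    using z by (simp add: wt_def algebra_simps)
  then have "M - wt (real d / 2) l - e \<in> \<int>"
    by simp
  moreover have "real l \<le> 2 * (real d / 2)"
    using assms(2) by simp
  ultimately show ?thesis
    unfolding tens_index_def vm_point_def wt_def by auto
qed

lemma supported_first_in_tens_space:
  assumes "M - e - real d / 2 \<in> \<int>" "supported_first (real d / 2) M (Suc d) f"
  shows "f \<in> tens_space (real d / 2) e"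
proof -
  have "{a. f a \<noteq> 0} \<subseteq> vm_point (real d / 2) M ` {..<Suc d}"
    using assms(2) unfolding supported_first_def by blast
  then show ?thesis
    unfolding tens_space_def using vm_point_in_tens_index[OF assms(1)] finite_subset by blast
qed

lemma tens_index_vm_point:
  assumes "a \<in> tens_index (real d / 2) e"
  shows "\<exists>l<Suc d. a = vm_point (real d / 2) (fst a + snd a) l"
    and "fst a + snd a - e - real d / 2 \<in> \<int>"
proof -
  obtain k :: nat where k: "real k \<le> real d" "fst a = - (real d / 2) + real k" and "snd a - e \<in> \<int>"
    using assms unfolding tens_index_def by auto
  then show "\<exists>l<Suc d. a = vm_point (real d / 2) (fst a + snd a) l"
    by (intro exI[of _ k]) (auto simp: vm_point_def wt_def prod_eq_iff)
  have "fst a + snd a - e - real d / 2 = (snd a - e) + of_int (int k - int d)"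
    using k by simp
  then show "fst a + snd a - e - real d / 2 \<in> \<int>"
    using \<open>snd a - e \<in> \<int>\<close> by (metis Ints_add Ints_of_int)
qed

lemma supported_first_restrict_J0:
  assumes "f \<in> tens_space (real d / 2) e"
  shows "supported_first (real d / 2) M (Suc d) (restrict_J0 M f)"
  unfolding supported_first_def
proof (intro allI impI)
  fix a assume "restrict_J0 M f a \<noteq> 0"
  then have "fst a + snd a = M" "a \<in> tens_index (real d / 2) e"
    using assms unfolding restrict_J0_def tens_space_def by (auto split: if_splits)
  then show "\<exists>l<Suc d. a = vm_point (real d / 2) M l"
    using tens_index_vm_point(1) by blast
qed

lemma tens_space_J0_decomposition:
  assumes "v \<in> tens_space (real d / 2) e"
  obtains Ms where "finite Ms" "\<And>M. M \<in> Ms \<Longrightarrow> M - e - real d / 2 \<in> \<int>"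
    and "v = (\<lambda>a. \<Sum>M\<in>Ms. restrict_J0 M v a)"
proof
  let ?supp = "{a. v a \<noteq> 0}"
  let ?Ms = "(\<lambda>a. fst a + snd a) ` ?supp"
  show "finite ?Ms"
    using assms unfolding tens_space_def by simp
  show "M - e - real d / 2 \<in> \<int>" if "M \<in> ?Ms" for M
    using that assms tens_index_vm_point(2) unfolding tens_space_def by blast
  show "v = (\<lambda>a. \<Sum>M\<in>?Ms. restrict_J0 M v a)"
  proof
    fix a
    show "v a = (\<Sum>M\<in>?Ms. restrict_J0 M v a)"
    proof (cases "v a = 0")
      case True
      then show ?thesis by (simp add: restrict_J0_def sum.neutral)
    next
      case False
      then show ?thesis
        using assms unfolding restrict_J0_def tens_space_def by (simp add: sum.delta)
    qed
  qed
qed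

definition VM_comb :: "real \<Rightarrow> real \<Rightarrow> complex vec \<Rightarrow> (real \<times> real \<Rightarrow> complex)" where
  "VM_comb g M u = (\<lambda>a. \<Sum>l<dim_vec u. u $ l * basis_vec (vm_point g M l) a)"

definition VM_coords :: "real \<Rightarrow> real \<Rightarrow> nat \<Rightarrow> (real \<times> real \<Rightarrow> complex) \<Rightarrow> complex vec" where
  "VM_coords g M n f = vec n (\<lambda>l. f (vm_point g M l))"

lemma VM_comb_at_point: "l < dim_vec u \<Longrightarrow> VM_comb g M u (vm_point g M l) = u $ l"
  unfolding VM_comb_def basis_vec_def by (simp add: if_distrib cong: if_cong)

lemma supported_first_VM_comb: "supported_first g M (dim_vec u) (VM_comb g M u)"
  unfolding supported_first_def
proof (intro allI impI)
  fix a assume "VM_comb g M u a \<noteq> 0"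
  then obtain l where "l < dim_vec u" "u $ l * basis_vec (vm_point g M l) a \<noteq> 0"
    unfolding VM_comb_def by (elim sum.not_neutral_contains_not_neutral) simp
  then show "\<exists>l<dim_vec u. a = vm_point g M l"
    by (auto simp: basis_vec_def split: if_splits)
qed

lemma supported_first_eqI:
  assumes "supported_first g M n f" "supported_first g M n h"
    and "\<And>l. l < n \<Longrightarrow> f (vm_point g M l) = h (vm_point g M l)"
  shows "f = h"
proof
  fix a
  show "f a = h a"
  proof (cases "\<exists>l<n. a = vm_point g M l")
    case True
    then show ?thesis using assms(3) by blast
  next
    case False
    then have "\<And>l. l < n \<Longrightarrow> a \<noteq> vm_point g M l" by blast
    then show ?thesis using supported_firstD[OF assms(1)] supported_firstD[OF assms(2)] by simp
  qed
qed

lemma VM_comb_VM_coords: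
  assumes "supported_first g M n f"
  shows "VM_comb g M (VM_coords g M n f) = f"
proof (rule supported_first_eqI[OF _ assms])
  show "supported_first g M n (VM_comb g M (VM_coords g M n f))"
    using supported_first_VM_comb[of g M "VM_coords g M n f"] by (simp add: VM_coords_def)
qed (simp add: VM_coords_def VM_comb_at_point)

lemma VM_coords_VM_comb: "u \<in> carrier_vec n \<Longrightarrow> VM_coords g M n (VM_comb g M u) = u"
  unfolding VM_coords_def by (intro eq_vecI) (auto simp: VM_comb_at_point)

lemma VM_comb_inj:
  "u \<in> carrier_vec n \<Longrightarrow> u' \<in> carrier_vec n \<Longrightarrow> VM_comb g M u = VM_comb g M u' \<Longrightarrow> u = u'"
  by (metis VM_coords_VM_comb)

lemma VM_comb_zero [simp]: "VM_comb g M (0\<^sub>v n) = (\<lambda>_. 0)"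
  unfolding VM_comb_def by simp

lemma VM_comb_smult: "VM_comb g M (c \<cdot>\<^sub>v u) = (\<lambda>a. c * VM_comb g M u a)"
  unfolding VM_comb_def by (simp add: sum_distrib_left mult.assoc)

lemma VM_comb_mult_mat_vec:
  assumes U: "U \<in> carrier_mat n n" and y: "y \<in> carrier_vec n"
  shows "VM_comb g M (U *\<^sub>v y) = (\<lambda>a. \<Sum>k<n. y $ k * VM_comb g M (col U k) a)"
proof
  fix a
  have "VM_comb g M (U *\<^sub>v y) a = (\<Sum>l<n. (\<Sum>k<n. U $$ (l, k) * y $ k) * basis_vec (vm_point g M l) a)"
    unfolding VM_comb_def using U y by (intro sum.cong) (auto simp: scalar_prod_def atLeast0LessThan)
  also have "\<dots> = (\<Sum>l<n. \<Sum>k<n. y $ k * (U $$ (l, k) * basis_vec (vm_point g M l) a))"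
    unfolding sum_distrib_right by (simp add: mult_ac)
  also have "\<dots> = (\<Sum>k<n. y $ k * (\<Sum>l<n. U $$ (l, k) * basis_vec (vm_point g M l) a))"
    by (subst sum.swap) (simp add: sum_distrib_left)
  also have "\<dots> = (\<Sum>k<n. y $ k * VM_comb g M (col U k) a)"
    unfolding VM_comb_def using U by (intro sum.cong) auto
  finally show "VM_comb g M (U *\<^sub>v y) a = (\<Sum>k<n. y $ k * VM_comb g M (col U k) a)" .
qed

definition op_mat :: "real \<Rightarrow> real \<Rightarrow> real \<Rightarrow> ((real \<times> real \<Rightarrow> complex) \<Rightarrow> (real \<times> real \<Rightarrow> complex))
    \<Rightarrow> complex mat" where
  "op_mat g M M' T = mat (fdim g) (fdim g) (\<lambda>(k, l). T (basis_vec (vm_point g M l)) (vm_point g M' k))"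

lemma dim_op_mat [simp]: "dim_row (op_mat g M M' T) = fdim g" "dim_col (op_mat g M M' T) = fdim g"
  unfolding op_mat_def by simp_all

lemma op_mat_VM_comb:
  assumes lin: "pointwise_linear T"
    and maps: "\<And>f. supported_first g M (fdim g) f \<Longrightarrow> supported_first g M' (fdim g) (T f)"
    and u: "u \<in> carrier_vec (fdim g)"
  shows "T (VM_comb g M u) = VM_comb g M' (op_mat g M M' T *\<^sub>v u)"
proof (rule supported_first_eqI[where n = "fdim g"])
  show "supported_first g M' (fdim g) (T (VM_comb g M u))"
    using supported_first_VM_comb[of g M u] u by (intro maps) simp
  show "supported_first g M' (fdim g) (VM_comb g M' (op_mat g M M' T *\<^sub>v u))"
    using supported_first_VM_comb[of g M' "op_mat g M M' T *\<^sub>v u"] by (simp add: op_mat_def)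
  fix k assume k: "k < fdim g"
  have "T (VM_comb g M u) = (\<lambda>b. \<Sum>l<dim_vec u. u $ l * T (basis_vec (vm_point g M l)) b)"
    unfolding VM_comb_def by (rule pointwise_linearD[OF lin])
  then show "T (VM_comb g M u) (vm_point g M' k) = VM_comb g M' (op_mat g M M' T *\<^sub>v u) (vm_point g M' k)"
    using u k by (simp add: VM_comb_at_point op_mat_def scalar_prod_def atLeast0LessThan mult.commute)
qed

lemma Q_mat_VM_op_mat: "Q_mat_VM g j M = op_mat g M M (Q_op g j)"
  unfolding Q_mat_VM_def op_mat_def vm_point_def ..

lemma dim_Q_mat_VM [simp]: "dim_row (Q_mat_VM g j M) = fdim g" "dim_col (Q_mat_VM g j M) = fdim g"
  unfolding Q_mat_VM_op_mat by simp_all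

lemma Q_mat_VM_carrier [simp]: "Q_mat_VM (real d / 2) j M \<in> carrier_mat (Suc d) (Suc d)"
  unfolding Q_mat_VM_def by simp

lemma Q_op_VM_comb:
  assumes "u \<in> carrier_vec (Suc d)"
  shows "Q_op (real d / 2) j (VM_comb (real d / 2) M u) = VM_comb (real d / 2) M (Q_mat_VM (real d / 2) j M *\<^sub>v u)"
  unfolding Q_mat_VM_op_mat
  by (rule op_mat_VM_comb) (use assms in \<open>simp_all add: pointwise_linear_Q_op Q_op_weight_space\<close>)

definition Jp_mat_VM :: "real \<Rightarrow> real \<Rightarrow> real \<Rightarrow> complex mat" where
  "Jp_mat_VM g j M = op_mat g M (M + 1) (Jp_op g j)"

lemma dim_Jp_mat_VM [simp]: "dim_row (Jp_mat_VM g j M) = fdim g" "dim_col (Jp_mat_VM g j M) = fdim g"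
  unfolding Jp_mat_VM_def by simp_all

lemma Jp_mat_VM_carrier [simp]: "Jp_mat_VM (real d / 2) j M \<in> carrier_mat (Suc d) (Suc d)"
  unfolding Jp_mat_VM_def op_mat_def by simp

lemma Jp_op_VM_comb:
  assumes "u \<in> carrier_vec (Suc d)"
  shows "Jp_op (real d / 2) j (VM_comb (real d / 2) M u) = VM_comb (real d / 2) (M + 1) (Jp_mat_VM (real d / 2) j M *\<^sub>v u)"
  unfolding Jp_mat_VM_def
  by (rule op_mat_VM_comb) (use assms in \<open>simp_all add: pointwise_linear_Jp_op Jp_op_weight_space\<close>)

lemma Q_mat_VM_Jp_mat_VM_commute:
  fixes d :: nat
  defines "g \<equiv> real d / 2"
  shows "Q_mat_VM g j (M + 1) * Jp_mat_VM g j M = Jp_mat_VM g j M * Q_mat_VM g j M"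
proof (rule mat_eqI_mult_vec[where n = "Suc d" and m = "Suc d"])
  fix u :: "complex vec" assume u: "u \<in> carrier_vec (Suc d)"
  let ?Q = "Q_mat_VM g j M" and ?Q' = "Q_mat_VM g j (M + 1)" and ?P = "Jp_mat_VM g j M"
  have Pu: "?P *\<^sub>v u \<in> carrier_vec (Suc d)" and Qu: "?Q *\<^sub>v u \<in> carrier_vec (Suc d)"
    unfolding g_def using u by (auto intro: mult_mat_vec_carrier[OF _ u])
  have "VM_comb g (M + 1) ((?Q' * ?P) *\<^sub>v u) = VM_comb g (M + 1) (?Q' *\<^sub>v (?P *\<^sub>v u))"
    using u by (simp add: g_def assoc_mult_mat_vec[of _ "Suc d" "Suc d" _ "Suc d"])
  also have "\<dots> = Q_op g j (Jp_op g j (VM_comb g M u))"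
    unfolding g_def Jp_op_VM_comb[OF u] Q_op_VM_comb[OF Pu[unfolded g_def]] ..
  also have "\<dots> = Jp_op g j (Q_op g j (VM_comb g M u))"
    by (rule Q_op_Jp_op_commute)
  also have "\<dots> = VM_comb g (M + 1) (?P *\<^sub>v (?Q *\<^sub>v u))"
    unfolding g_def Q_op_VM_comb[OF u] Jp_op_VM_comb[OF Qu[unfolded g_def]] ..
  also have "\<dots> = VM_comb g (M + 1) ((?P * ?Q) *\<^sub>v u)"
    using u by (simp add: g_def assoc_mult_mat_vec[of _ "Suc d" "Suc d" _ "Suc d"])
  finally show "(?Q' * ?P) *\<^sub>v u = (?P * ?Q) *\<^sub>v u"
    by (rule VM_comb_inj[rotated 2, where n = "Suc d"]) (simp_all add: g_def carrier_vecI)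
qed (auto simp: g_def intro!: mult_carrier_mat[where n = "Suc d"])

lemma Jp_mat_VM_entry:
  assumes "k < fdim g" "l < fdim g"
  shows "Jp_mat_VM g j M $$ (k, l) =
    (if k = Suc l then Gam_plus g (wt g k - 1) else 0) + (if k = l then Gam_plus j (M - wt g k) else 0)"
  using assms by (simp add: Jp_mat_VM_def op_mat_def vm_point_def[of g "M + 1" k] basis_vec_vm_point)

lemma Q_mat_VM_entry:
  assumes "k < fdim g" "l < fdim g"
  shows "Q_mat_VM g j M $$ (k, l) =
      (if k = l then complex_of_real (casimir_diag g j (wt g k) (M - wt g k)) else 0)
    + (if k = Suc l then Gam_plus g (wt g k - 1) * Gam_minus j (M - wt g k + 1) else 0)
    + (if l = Suc k then Gam_plus j (M - wt g k - 1) * Gam_minus g (wt g k + 1) else 0)"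
  using assms by (simp add: Q_mat_VM_op_mat op_mat_def vm_point_def[of g M k] basis_vec_vm_point Q_op_apply)

lemma det_Jp_mat_VM_neq_0:
  assumes M: "M \<ge> \<bar>j\<bar> + real d + 2"
  shows "det (Jp_mat_VM (real d / 2) j M) \<noteq> 0"
proof -
  let ?P = "Jp_mat_VM (real d / 2) j M"
  have "det ?P = prod_list (diag_mat ?P)"
    by (rule det_lower_triangular[of "Suc d"]) (auto simp: Jp_mat_VM_entry)
  moreover have "Gam_plus j (M - wt (real d / 2) k) \<noteq> 0" if "k < Suc d" for k
  proof -
    have "wt (real d / 2) k \<le> real d"
      using that by (simp add: wt_def)
    then have "j - (M - wt (real d / 2) k) \<noteq> 0" "j + (M - wt (real d / 2) k) + 1 \<noteq> 0"
      using M by (auto simp: abs_if split: if_splits)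
    then show ?thesis
      unfolding Gam_plus_def by (simp del: of_real_add of_real_diff)
  qed
  ultimately show ?thesis
    by (auto simp: diag_mat_def Jp_mat_VM_entry prod_list_zero_iff)
qed

lemma char_poly_Q_mat_VM_shift:
  assumes "M \<ge> \<bar>j\<bar> + real d + 2"
  shows "char_poly (Q_mat_VM (real d / 2) j (M + 1)) = char_poly (Q_mat_VM (real d / 2) j M)"
  by (rule char_poly_eq_if_intertwined[where n = "Suc d", OF _ _ _ det_Jp_mat_VM_neq_0[OF assms]
        Q_mat_VM_Jp_mat_VM_commute]) simp_all

section \<open>The characteristic polynomial\<close>

text \<open>The diagonal entry at weight \<open>mu\<close> of the matrix of \<open>Q\<close> on \<open>V\<^sub>M\<close>, and the product of the two
  off-diagonal entries next to it; over any commutative ring, so that \<open>M\<close> can be replaced by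
  the polynomial variable.\<close>

definition Q_diag :: "'a::comm_ring_1 \<Rightarrow> 'a \<Rightarrow> 'a \<Rightarrow> 'a \<Rightarrow> 'a" where
  "Q_diag g j M mu = - (M * (M - 1)) - (g - mu + 1) * (g + mu) - (j - (M - mu) + 1) * (j + (M - mu))"

definition Q_hop :: "'a::comm_ring_1 \<Rightarrow> 'a \<Rightarrow> 'a \<Rightarrow> 'a \<Rightarrow> 'a" where
  "Q_hop g j M mu = (g - mu) * (g + mu + 1) * (j - (M - mu) + 1) * (j + (M - mu))"

lemma poly_Q_diag: "poly (Q_diag [:g:] [:j:] [:0, 1:] [:mu:]) M = Q_diag g j M mu"
  by (simp add: Q_diag_def algebra_simps)

lemma poly_Q_hop: "poly (Q_hop [:g:] [:j:] [:0, 1:] [:mu:]) M = Q_hop g j M mu"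
  by (simp add: Q_hop_def algebra_simps)

lemma of_real_Q_diag: "Q_diag (of_real g) (of_real j) (of_real M) (of_real mu) = of_real (Q_diag g j M mu)"
  by (simp add: Q_diag_def)

lemma of_real_Q_hop: "Q_hop (of_real g) (of_real j) (of_real M) (of_real mu) = of_real (Q_hop g j M mu)"
  by (simp add: Q_hop_def)

lemma Q_diag_shift:
  "Q_diag (h + 1/2) j (h - 1/2 - j) (w - 1/2) = Q_diag h (j + 1/2) (h + 1/2 - j) (w :: real)"
  by (simp add: Q_diag_def algebra_simps)

lemma Q_hop_shift:
  "Q_hop (h + 1/2) j (h - 1/2 - j) (w - 1/2) = Q_hop h (j + 1/2) (h + 1/2 - j) (w :: real)"
  by (simp add: Q_hop_def algebra_simps)

lemma poly_char_poly_Q_mat_VM: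
  fixes d :: nat
  defines "g \<equiv> real d / 2"
  shows "poly (char_poly (Q_mat_VM g j M)) x =
    continuant (\<lambda>k. x - Q_diag (of_real g) (of_real j) (of_real M) (of_real (wt g k)))
      (\<lambda>k. Q_hop (of_real g) (of_real j) (of_real M) (of_real (wt g k))) (Suc d)"
proof -
  let ?A = "Q_mat_VM g j M"
  have "poly (char_poly ?A) x =
      continuant (\<lambda>k. x - ?A $$ (k, k)) (\<lambda>k. ?A $$ (k, Suc k) * ?A $$ (Suc k, k)) (Suc d)"
    by (rule poly_char_poly_tridiagonal) (auto simp: g_def Q_mat_VM_entry)
  also have "\<dots> = continuant (\<lambda>k. x - Q_diag (of_real g) (of_real j) (of_real M) (of_real (wt g k)))
      (\<lambda>k. Q_hop (of_real g) (of_real j) (of_real M) (of_real (wt g k))) (Suc d)"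
  proof (rule continuant_cong)
    fix k assume "k < Suc d"
    then show "x - ?A $$ (k, k) = x - Q_diag (of_real g) (of_real j) (of_real M) (of_real (wt g k))"
      by (simp add: g_def Q_mat_VM_entry casimir_diag_def Q_diag_def)
  next
    fix k assume k: "Suc k < Suc d"
    let ?w = "wt g k"
    have "?A $$ (k, Suc k) = Gam_plus j (M - ?w - 1) * Gam_minus g (?w + 1)"
      using k by (simp add: g_def Q_mat_VM_entry)
    moreover have "?A $$ (Suc k, k) = Gam_plus g ?w * Gam_minus j (M - ?w)"
      using k by (simp add: g_def Q_mat_VM_entry wt_Suc)
    ultimately have "?A $$ (k, Suc k) * ?A $$ (Suc k, k) =
        (Gam_plus g ?w * Gam_minus g (?w + 1)) * (Gam_plus j (M - ?w - 1) * Gam_minus j (M - ?w))"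
      by (simp add: mult_ac)
    also have "\<dots> = Q_hop (of_real g) (of_real j) (of_real M) (of_real ?w)"
      unfolding Gam_plus_mult_Gam_minus Gam_plus_mult_Gam_minus' by (simp add: Q_hop_def)
    finally show "?A $$ (k, Suc k) * ?A $$ (Suc k, k) = Q_hop (of_real g) (of_real j) (of_real M) (of_real ?w)" .
  qed
  finally show ?thesis .
qed

lemma char_poly_Q_mat_VM_indep_M:
  "char_poly (Q_mat_VM (real d / 2) j M) = char_poly (Q_mat_VM (real d / 2) j M')"
proof (rule poly_ext)
  fix x
  let ?g = "real d / 2" and ?c = complex_of_real
  define M0 where "M0 = \<bar>j\<bar> + real d + 2"
  \<comment> \<open>the characteristic polynomial at \<open>x\<close>, as a polynomial in \<open>M\<close>\<close>
  define F where "F = continuant (\<lambda>k. [:x:] - Q_diag [:?c ?g:] [:?c j:] [:0, 1:] [:?c (wt ?g k):])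
      (\<lambda>k. Q_hop [:?c ?g:] [:?c j:] [:0, 1:] [:?c (wt ?g k):]) (Suc d)"
  have F: "poly F (?c N) = poly (char_poly (Q_mat_VM ?g j N)) x" for N
    unfolding F_def poly_continuant poly_char_poly_Q_mat_VM
    by (simp only: poly_diff poly_pCons poly_0 poly_Q_diag poly_Q_hop) simp
  have "poly F (?c M0 + of_nat n) = poly F (?c M0)" for n
  proof (induction n)
    case (Suc n)
    have "poly F (?c M0 + of_nat (Suc n)) = poly F (?c (M0 + real n + 1))"
      by (simp add: algebra_simps)
    also have "\<dots> = poly F (?c (M0 + real n))"
      unfolding F by (rule arg_cong[OF char_poly_Q_mat_VM_shift]) (simp add: M0_def)
    finally show ?case
      using Suc by simp
  qed simp
  then have "poly F z = poly F (?c M0)" for z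
    by (rule poly_eq_const_if_periodic)
  then show "poly (char_poly (Q_mat_VM ?g j M)) x = poly (char_poly (Q_mat_VM ?g j M')) x"
    unfolding F[symmetric] by metis
qed

definition Q_eigenvalue :: "real \<Rightarrow> real \<Rightarrow> nat \<Rightarrow> complex" where
  "Q_eigenvalue g j k = complex_of_real (- (j + wt g k) * (j + wt g k + 1))"

text \<open>At \<open>M = \<gamma> - 1 - j\<close> the last off-diagonal product vanishes and the remaining block is the
  matrix for \<open>\<gamma> - 1/2\<close>.\<close>

lemma poly_char_poly_Q_mat_VM_split:
  fixes d :: nat
  defines "g \<equiv> real (Suc d) / 2"
  shows "poly (char_poly (Q_mat_VM g j (g - 1 - j))) x =
    (x - Q_eigenvalue g j 0) * poly (char_poly (Q_mat_VM (real d / 2) (j + 1/2) (g - j))) x"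
proof -
  let ?a = "\<lambda>k. x - of_real (Q_diag g j (g - 1 - j) (wt g k))"
  let ?p = "\<lambda>k. of_real (Q_hop g j (g - 1 - j) (wt g k)) :: complex"
  have wt_shift: "wt g k = wt (real d / 2) k - 1/2" for k
    by (simp add: g_def wt_def field_simps)
  have "Q_hop g j (g - 1 - j) (wt g d) = 0"
    by (simp add: g_def Q_hop_def wt_def field_simps)
  then have "?p d = 0"
    by (simp only: of_real_0)
  moreover have "Q_diag g j (g - 1 - j) (wt g (Suc d)) = - (j + wt g 0) * (j + wt g 0 + 1)"
    by (simp add: g_def Q_diag_def wt_def field_simps) algebra
  then have "?a (Suc d) = x - Q_eigenvalue g j 0"
    unfolding Q_eigenvalue_def by simp
  moreover have "g = real d / 2 + 1/2" "g - 1 - j = real d / 2 - 1/2 - j" "g - j = real d / 2 + 1/2 - j"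
    by (simp_all add: g_def)
  then have "Q_diag g j (g - 1 - j) (wt g k) = Q_diag (real d / 2) (j + 1/2) (g - j) (wt (real d / 2) k)"
    and "Q_hop g j (g - 1 - j) (wt g k) = Q_hop (real d / 2) (j + 1/2) (g - j) (wt (real d / 2) k)" for k
    unfolding wt_shift by (simp_all only: Q_diag_shift Q_hop_shift)
  then have "continuant ?a ?p (Suc d) = poly (char_poly (Q_mat_VM (real d / 2) (j + 1/2) (g - j))) x"
    unfolding poly_char_poly_Q_mat_VM of_real_Q_diag of_real_Q_hop by simp
  moreover have "poly (char_poly (Q_mat_VM g j (g - 1 - j))) x = continuant ?a ?p (Suc (Suc d))"
    unfolding g_def poly_char_poly_Q_mat_VM of_real_Q_diag of_real_Q_hop ..
  ultimately show ?thesis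
    by simp
qed

theorem char_poly_Q_mat_VM:
  "char_poly (Q_mat_VM (real d / 2) j M) = (\<Prod>k<Suc d. [:- Q_eigenvalue (real d / 2) j k, 1:])"
proof (induction d arbitrary: j M)
  case 0
  have "char_poly (Q_mat_VM 0 j M) = char_poly (Q_mat_VM 0 j 0)"
    using char_poly_Q_mat_VM_indep_M[of 0] by simp
  also have "\<dots> = [:- Q_eigenvalue 0 j 0, 1:]"
    by (rule poly_ext)
      (simp add: poly_char_poly_Q_mat_VM[of 0, simplified] Q_diag_def Q_eigenvalue_def wt_def algebra_simps)
  finally show ?case
    by simp
next
  case (Suc d)
  let ?g = "real (Suc d) / 2"
  show ?case
  proof (rule poly_ext)
    fix x
    have "poly (char_poly (Q_mat_VM ?g j M)) x = poly (char_poly (Q_mat_VM ?g j (?g - 1 - j))) x"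
      using char_poly_Q_mat_VM_indep_M by metis
    also have "\<dots> = (x - Q_eigenvalue ?g j 0) * poly (char_poly (Q_mat_VM (real d / 2) (j + 1/2) (?g - j))) x"
      by (rule poly_char_poly_Q_mat_VM_split)
    also have "Q_eigenvalue (real d / 2) (j + 1/2) k = Q_eigenvalue ?g j (Suc k)" for k
      by (simp add: Q_eigenvalue_def wt_def field_simps)
    then have "poly (char_poly (Q_mat_VM (real d / 2) (j + 1/2) (?g - j))) x =
        (\<Prod>k<Suc d. x - Q_eigenvalue ?g j (Suc k))"
      unfolding Suc.IH poly_prod by simp
    also have "(x - Q_eigenvalue ?g j 0) * (\<Prod>k<Suc d. x - Q_eigenvalue ?g j (Suc k)) =
        poly (\<Prod>k<Suc (Suc d). [:- Q_eigenvalue ?g j k, 1:]) x"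
      unfolding prod.lessThan_Suc_shift[of _ "Suc d"] by (simp add: poly_prod left_diff_distrib del: prod.lessThan_Suc)
    finally show "poly (char_poly (Q_mat_VM ?g j M)) x = poly (\<Prod>k<Suc (Suc d). [:- Q_eigenvalue ?g j k, 1:]) x" .
  qed
qed

lemma Q_eigenvalue_eq_iff:
  "Q_eigenvalue (real d / 2) j k = Q_eigenvalue (real d / 2) j l \<longleftrightarrow> k = l \<or> real k + real l = real d - 2 * j - 1"
proof -
  define x where "x = j + wt (real d / 2) k"
  define y where "y = j + wt (real d / 2) l"
  have key: "x * (x + 1) - y * (y + 1) = (real k - real l) * (2 * j - real d + real k + real l + 1)"
    unfolding x_def y_def wt_def by (simp add: field_simps)
  have "Q_eigenvalue (real d / 2) j k = Q_eigenvalue (real d / 2) j l \<longleftrightarrow> x * (x + 1) = y * (y + 1)"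
    unfolding Q_eigenvalue_def x_def[symmetric] y_def[symmetric] of_real_eq_iff by simp
  also have "\<dots> \<longleftrightarrow> (real k - real l) * (2 * j - real d + real k + real l + 1) = 0"
    unfolding key[symmetric] by simp
  also have "\<dots> \<longleftrightarrow> k = l \<or> real k + real l = real d - 2 * j - 1"
    by auto
  finally show ?thesis .
qed

lemma inj_on_Q_eigenvalue_iff:
  assumes "2 * j \<in> \<int>"
  shows "inj_on (Q_eigenvalue (real d / 2) j) {..<Suc d} \<longleftrightarrow> j > real d / 2 - 1 \<or> j < - (real d / 2)"
proof
  assume inj: "inj_on (Q_eigenvalue (real d / 2) j) {..<Suc d}"
  show "j > real d / 2 - 1 \<or> j < - (real d / 2)"
  proof (rule ccontr)
    assume "\<not> ?thesis"
    moreover obtain z where z: "2 * j = of_int z"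
      using assms Ints_cases by blast
    ultimately have z_bounds: "- int d \<le> z" "z \<le> int d - 2"
      by linarith+
    define s where "s = nat (int d - z - 1)"
    have s: "real s = real d - 2 * j - 1" "1 \<le> s" "s \<le> 2 * d - 1"
      unfolding s_def using z z_bounds by auto
    show False
    proof (cases "s \<le> d")
      case True
      then have "Q_eigenvalue (real d / 2) j s = Q_eigenvalue (real d / 2) j 0"
        unfolding Q_eigenvalue_eq_iff using s by simp
      with True s(2) inj show False
        by (auto dest: inj_onD)
    next
      case False
      then have "Q_eigenvalue (real d / 2) j d = Q_eigenvalue (real d / 2) j (s - d)"
        unfolding Q_eigenvalue_eq_iff using s by simp
      moreover have "s - d < d"
        using s False by auto
      ultimately show False
        using inj_onD[OF inj] by fastforce
    qed
  qed
next
  assume bounds: "j > real d / 2 - 1 \<or> j < - (real d / 2)"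
  show "inj_on (Q_eigenvalue (real d / 2) j) {..<Suc d}"
  proof (rule inj_onI, rule ccontr)
    fix k l assume "k \<in> {..<Suc d}" "l \<in> {..<Suc d}" "k \<noteq> l"
      and "Q_eigenvalue (real d / 2) j k = Q_eigenvalue (real d / 2) j l"
    then have "real k + real l = real d - 2 * j - 1" "1 \<le> k + l" "k + l \<le> 2 * d - 1"
      unfolding Q_eigenvalue_eq_iff by auto
    then show False
      using bounds by linarith
  qed
qed

section \<open>Diagonalisability\<close>

lemma det_neq_0_if_eigenfunction_columns:
  assumes lin: "pointwise_linear T" and U: "U \<in> carrier_mat n n"
    and nz: "\<And>k. k < n \<Longrightarrow> col U k \<noteq> 0\<^sub>v n"
    and eig: "\<And>k. k < n \<Longrightarrow> T (VM_comb g M (col U k)) = (\<lambda>a. lam k * VM_comb g M (col U k) a)"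
    and inj: "inj_on lam {..<n}"
  shows "det U \<noteq> 0"
proof
  assume "det U = 0"
  then obtain c where c: "c \<in> carrier_vec n" "c \<noteq> 0\<^sub>v n" "U *\<^sub>v c = 0\<^sub>v n"
    using det_0_iff_vec_prod_zero[OF U] by blast
  have sum0: "(\<lambda>a. \<Sum>k<n. c $ k * VM_comb g M (col U k) a) = (\<lambda>_. 0)"
    using VM_comb_mult_mat_vec[OF U c(1), of g M] c(3) by simp
  have nz': "VM_comb g M (col U k) \<noteq> (\<lambda>_. 0)" if "k < n" for k
  proof
    assume "VM_comb g M (col U k) = (\<lambda>_. 0)"
    then have "col U k = 0\<^sub>v n"
      using U that by (intro VM_comb_inj[OF _ zero_carrier_vec]) auto
    with nz[OF that] show False ..
  qed
  have "c $ k = 0" if "k < n" for k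
    by (rule eigenfunctions_lin_indep[where c = "\<lambda>k. c $ k", OF lin eig nz' inj sum0 that])
  then have "c = 0\<^sub>v n"
    using c(1) by (intro eq_vecI) auto
  with c(2) show False ..
qed

lemma Q_mat_VM_eigenvector_basis:
  fixes d :: nat
  defines "g \<equiv> real d / 2"
  assumes inj: "inj_on (Q_eigenvalue g j) {..<Suc d}"
  obtains U where "U \<in> carrier_mat (Suc d) (Suc d)" "det U \<noteq> 0"
    and "\<And>k. k < Suc d \<Longrightarrow>
      Q_op g j (VM_comb g M (col U k)) = (\<lambda>a. Q_eigenvalue g j k * VM_comb g M (col U k) a)"
proof -
  let ?A = "Q_mat_VM g j M" and ?n = "Suc d"
  have "eigenvalue ?A (Q_eigenvalue g j k)" if "k < ?n" for k
  proof -
    have "poly (char_poly ?A) (Q_eigenvalue g j k) = (\<Prod>i<?n. Q_eigenvalue g j k - Q_eigenvalue g j i)"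
      by (simp add: g_def char_poly_Q_mat_VM poly_prod del: prod.lessThan_Suc)
    also have "\<dots> = 0"
      using that by (intro prod_zero) auto
    finally show ?thesis
      using eigenvalue_root_char_poly[OF Q_mat_VM_carrier[of d j M, folded g_def]] by simp
  qed
  then obtain u where "\<And>k. k < ?n \<Longrightarrow> eigenvector ?A (u k) (Q_eigenvalue g j k)"
    unfolding eigenvalue_def by metis
  then have u_carrier: "u k \<in> carrier_vec ?n" and u_nz: "u k \<noteq> 0\<^sub>v ?n"
    and u_eig: "?A *\<^sub>v u k = Q_eigenvalue g j k \<cdot>\<^sub>v u k" if "k < ?n" for k
    using that unfolding eigenvector_def by (auto simp: g_def)
  define U where "U = mat ?n ?n (\<lambda>(l, k). u k $ l)"
  have U: "U \<in> carrier_mat ?n ?n"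
    unfolding U_def by simp
  have col_U: "col U k = u k" if "k < ?n" for k
    using u_carrier[OF that] that unfolding U_def by (intro eq_vecI) auto
  have eig: "Q_op g j (VM_comb g M (col U k)) = (\<lambda>a. Q_eigenvalue g j k * VM_comb g M (col U k) a)"
    if "k < ?n" for k
    unfolding col_U[OF that] g_def Q_op_VM_comb[OF u_carrier[OF that, unfolded g_def]]
      u_eig[OF that, unfolded g_def] VM_comb_smult ..
  have "det U \<noteq> 0"
    by (rule det_neq_0_if_eigenfunction_columns[OF pointwise_linear_Q_op U _ eig inj])
      (use u_nz col_U in simp)
  with U eig show thesis
    using that by blast
qed

lemma eigen_decomposable_weight_space:
  fixes d :: nat
  defines "g \<equiv> real d / 2"
  assumes inj: "inj_on (Q_eigenvalue g j) {..<Suc d}"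
    and M: "M - e - g \<in> \<int>" and f: "supported_first g M (Suc d) f"
  shows "eigen_decomposable (tens_space g e) (Q_op g j) f"
proof -
  let ?n = "Suc d"
  obtain U where U: "U \<in> carrier_mat ?n ?n" "det U \<noteq> 0"
    and eig: "\<And>k. k < ?n \<Longrightarrow> Q_op g j (VM_comb g M (col U k)) = (\<lambda>a. Q_eigenvalue g j k * VM_comb g M (col U k) a)"
    using Q_mat_VM_eigenvector_basis[OF inj[unfolded g_def]] unfolding g_def by metis
  obtain U' where U': "U' \<in> carrier_mat ?n ?n" "U * U' = 1\<^sub>m ?n"
    using det_non_zero_imp_unit[OF U] unfolding Units_def ring_mat_def by auto
  define x where "x = VM_coords g M ?n f"
  define y where "y = U' *\<^sub>v x"
  have x: "x \<in> carrier_vec ?n" and y: "y \<in> carrier_vec ?n"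
    using U' unfolding x_def y_def VM_coords_def by auto
  have "U *\<^sub>v y = x"
    using U U' x unfolding y_def by (simp add: assoc_mult_mat_vec[symmetric, of U ?n ?n U' ?n x])
  then have f_eq: "f = (\<lambda>a. \<Sum>k<?n. y $ k * VM_comb g M (col U k) a)"
    using VM_comb_VM_coords[OF f] VM_comb_mult_mat_vec[OF U(1) y] unfolding x_def by simp
  have "eigen_decomposable (tens_space g e) (Q_op g j) (\<lambda>a. \<Sum>k<?n. y $ k * VM_comb g M (col U k) a)"
  proof (rule eigen_decomposable_sum)
    fix k assume "k \<in> {..<?n}"
    then have k: "k < ?n" by simp
    show "eigen_decomposable (tens_space g e) (Q_op g j) (\<lambda>a. y $ k * VM_comb g M (col U k) a)"
    proof (rule eigen_decomposable_eigenvector)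
      show "(\<lambda>a. y $ k * VM_comb g M (col U k) a) \<in> tens_space g e"
        using supported_first_VM_comb[of g M "col U k"] U(1) k M
        unfolding g_def by (intro supported_first_in_tens_space supported_first_scale) auto
      show "Q_op g j (\<lambda>a. y $ k * VM_comb g M (col U k) a) =
          (\<lambda>a. Q_eigenvalue g j k * (y $ k * VM_comb g M (col U k) a))"
        unfolding pointwise_linear_scale[OF pointwise_linear_Q_op] eig[OF k] by (simp add: mult_ac)
    qed
  qed simp
  with f_eq show ?thesis
    by simp
qed

lemma diagonalisable_if_inj:
  assumes inj: "inj_on (Q_eigenvalue (real d / 2) j) {..<Suc d}"
  shows "diagonalisable_on (tens_space (real d / 2) e) (Q_op (real d / 2) j)"
  unfolding diagonalisable_on_iff
proof
  fix v assume v: "v \<in> tens_space (real d / 2) e"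
  obtain Ms where Ms: "finite Ms" "\<And>M. M \<in> Ms \<Longrightarrow> M - e - real d / 2 \<in> \<int>"
    and v_eq: "v = (\<lambda>a. \<Sum>M\<in>Ms. restrict_J0 M v a)"
    using tens_space_J0_decomposition[OF v] by blast
  have "eigen_decomposable (tens_space (real d / 2) e) (Q_op (real d / 2) j) (\<lambda>a. \<Sum>M\<in>Ms. restrict_J0 M v a)"
    using Ms eigen_decomposable_weight_space[OF inj _ supported_first_restrict_J0[OF v]]
    by (intro eigen_decomposable_sum) auto
  with v_eq show "eigen_decomposable (tens_space (real d / 2) e) (Q_op (real d / 2) j) v"
    by simp
qed

lemma Q_eigenfunction_eigenvalue:
  fixes d :: nat
  defines "g \<equiv> real d / 2"
  assumes f: "supported_first g M (Suc d) f" "f \<noteq> (\<lambda>_. 0)"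
    and eig: "Q_op g j f = (\<lambda>a. c * f a)"
  shows "\<exists>k<Suc d. c = Q_eigenvalue g j k"
proof -
  let ?A = "Q_mat_VM g j M"
  define x where "x = VM_coords g M (Suc d) f"
  have x: "x \<in> carrier_vec (Suc d)" and f_eq: "VM_comb g M x = f"
    unfolding x_def using VM_comb_VM_coords[OF f(1)] by (auto simp: VM_coords_def)
  have "VM_comb g M (?A *\<^sub>v x) = VM_comb g M (c \<cdot>\<^sub>v x)"
    using Q_op_VM_comb[OF x, of j M] eig unfolding g_def[symmetric] f_eq VM_comb_smult by simp
  moreover have "?A *\<^sub>v x \<in> carrier_vec (Suc d)"
    unfolding g_def by (rule mult_mat_vec_carrier[OF Q_mat_VM_carrier x])
  ultimately have "?A *\<^sub>v x = c \<cdot>\<^sub>v x"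
    using x by (intro VM_comb_inj[where n = "Suc d"]) auto
  moreover have "x \<noteq> 0\<^sub>v (Suc d)"
    using f(2) f_eq by auto
  ultimately have "eigenvalue ?A c"
    unfolding eigenvalue_def eigenvector_def using x by (auto simp: g_def)
  then have "poly (char_poly ?A) c = 0"
    using eigenvalue_root_char_poly[OF Q_mat_VM_carrier[of d j M, folded g_def]] by simp
  then have "(\<Prod>k<Suc d. c - Q_eigenvalue g j k) = 0"
    by (simp add: g_def char_poly_Q_mat_VM poly_prod del: prod.lessThan_Suc)
  then show ?thesis
    by (auto simp: prod_zero_iff simp del: prod.lessThan_Suc)
qed

fun prod_Q_minus :: "real \<Rightarrow> real \<Rightarrow> complex list \<Rightarrow> (real \<times> real \<Rightarrow> complex) \<Rightarrow> (real \<times> real \<Rightarrow> complex)" where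
  "prod_Q_minus g j [] f = f"
| "prod_Q_minus g j (c # cs) f = (\<lambda>a. Q_op g j (prod_Q_minus g j cs f) a - c * prod_Q_minus g j cs f a)"

lemma prod_Q_minus_sum:
  "prod_Q_minus g j cs (\<lambda>a. \<Sum>i\<in>I. f i a) = (\<lambda>a. \<Sum>i\<in>I. prod_Q_minus g j cs (f i) a)"
proof (induction cs)
  case (Cons c cs)
  have "Q_op g j (\<lambda>a. \<Sum>i\<in>I. prod_Q_minus g j cs (f i) a) = (\<lambda>b. \<Sum>i\<in>I. Q_op g j (prod_Q_minus g j cs (f i)) b)"
    by (auto simp: fun_eq_iff Q_op_apply sum_distrib_left sum.distrib)
  then show ?case
    by (simp add: Cons sum_subtractf sum_distrib_left)
qed simp

lemma prod_Q_minus_eigenvector: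
  assumes "Q_op g j f = (\<lambda>a. c * f a)"
  shows "prod_Q_minus g j cs f = (\<lambda>a. (\<Prod>x\<leftarrow>cs. c - x) * f a)"
proof (induction cs)
  case (Cons x cs)
  then show ?case
    using pointwise_linear_scale[OF pointwise_linear_Q_op, of g j "\<Prod>x\<leftarrow>cs. c - x" f]
    by (simp add: assms algebra_simps)
qed simp

lemma Gam_lowest_weight_chain_neq_0:
  assumes j: "2 * j \<in> \<int>" "j - e \<notin> \<int>" and r: "r < d"
  shows "Gam_plus (real d / 2) (wt (real d / 2) r) * Gam_minus j (e + real d / 2 - wt (real d / 2) r) \<noteq> 0"
proof -
  define m where "m = e + real d / 2 - wt (real d / 2) r"
  have "real d / 2 - wt (real d / 2) r \<noteq> 0" "real d / 2 + wt (real d / 2) r + 1 \<noteq> 0"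
    using r by (auto simp: wt_def)
  then have "Gam_plus (real d / 2) (wt (real d / 2) r) \<noteq> 0"
    unfolding Gam_plus_def by (simp del: of_real_add of_real_diff)
  moreover have jm: "j - m \<notin> \<int>"
  proof
    assume "j - m \<in> \<int>"
    then have "(j - m) + of_int (int d - int r) \<in> \<int>"
      by simp
    with j(2) show False
      by (simp add: m_def wt_def)
  qed
  then have "j - m + 1 \<noteq> 0"
    by (metis Ints_0 add_diff_cancel_right' diff_0 Ints_1 Ints_diff)
  moreover have "j + m \<noteq> 0"
  proof
    assume "j + m = 0"
    then have "j - m = 2 * j"
      by simp
    with jm j(1) show False
      by simp
  qed
  ultimately show ?thesis
    unfolding Gam_minus_def m_def[symmetric] by (simp del: of_real_add of_real_diff)
qed

lemma prod_Q_minus_lowest_weight: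
  assumes len: "length cs \<le> d"
    and Gam: "\<And>r. r < d \<Longrightarrow> Gam_plus g (wt g r) * Gam_minus j (M - wt g r) \<noteq> 0"
  shows "supported_first g M (Suc (length cs)) (prod_Q_minus g j cs (basis_vec (vm_point g M 0)))
    \<and> prod_Q_minus g j cs (basis_vec (vm_point g M 0)) (vm_point g M (length cs)) \<noteq> 0"
  using len
proof (induction cs)
  case Nil
  have "supported_first g M 1 (basis_vec (vm_point g M 0))"
    by (rule supported_first_basis_vec) simp
  then show ?case
    by (simp add: basis_vec_def)
next
  case (Cons c cs)
  let ?f = "prod_Q_minus g j cs (basis_vec (vm_point g M 0))"
  let ?r = "length cs"
  have f: "supported_first g M (Suc ?r) ?f" "?f (vm_point g M ?r) \<noteq> 0"
    using Cons by auto
  have "supported_first g M (Suc (Suc ?r)) (\<lambda>a. Q_op g j ?f a - c * ?f a)"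
    using f(1) by (intro supported_first_diff supported_first_Q_op) (auto elim: supported_first_mono)
  moreover have "?f (vm_point g M (Suc ?r)) = 0"
    using f(1) by (rule supported_firstD) simp
  then have "Q_op g j ?f (vm_point g M (Suc ?r)) - c * ?f (vm_point g M (Suc ?r)) \<noteq> 0"
    using Q_op_at_next[OF f(1)] Gam[of ?r] f(2) Cons.prems by simp
  ultimately show ?case
    by simp
qed

lemma prod_Q_minus_restrict_J0_eigenvector:
  fixes d :: nat
  defines "g \<equiv> real d / 2"
  assumes w: "w \<in> tens_space g e" "Q_op g j w = (\<lambda>a. c * w a)"
    and cs: "Q_eigenvalue g j ` {..<Suc d} \<subseteq> set cs"
  shows "prod_Q_minus g j cs (restrict_J0 M w) = (\<lambda>_. 0)"
proof -
  have eig: "Q_op g j (restrict_J0 M w) = (\<lambda>a. c * restrict_J0 M w a)"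
    unfolding Q_op_restrict_J0 w(2) by (simp add: restrict_J0_def fun_eq_iff)
  show ?thesis
  proof (cases "restrict_J0 M w = (\<lambda>_. 0)")
    case False
    have "supported_first g M (Suc d) (restrict_J0 M w)"
      unfolding g_def by (rule supported_first_restrict_J0[OF w(1)[unfolded g_def]])
    then obtain k where "k < Suc d" "c = Q_eigenvalue g j k"
      using Q_eigenfunction_eigenvalue[OF _ False eig[unfolded g_def]] unfolding g_def by blast
    with cs have zero: "(\<Prod>x\<leftarrow>cs. c - x) = 0"
      by (auto simp: prod_list_zero_iff)
    show ?thesis
      unfolding prod_Q_minus_eigenvector[OF eig] zero by simp
  next
    case True
    then show ?thesis
      using prod_Q_minus_eigenvector[OF eig, of cs] by simp
  qed
qed

lemma prod_Q_minus_restrict_J0_eigen_decomposable: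
  fixes d :: nat
  defines "g \<equiv> real d / 2"
  assumes "eigen_decomposable (tens_space g e) (Q_op g j) f"
    and cs: "Q_eigenvalue g j ` {..<Suc d} \<subseteq> set cs"
  shows "prod_Q_minus g j cs (restrict_J0 M f) = (\<lambda>_. 0)"
proof -
  obtain ws where ws: "\<forall>w\<in>set ws. w \<in> tens_space g e \<and> (\<exists>c. Q_op g j w = (\<lambda>a. c * w a))"
    and f: "f = (\<lambda>a. \<Sum>w\<leftarrow>ws. w a)"
    using assms(2) unfolding eigen_decomposable_def by blast
  have "restrict_J0 M f = (\<lambda>a. \<Sum>i<length ws. restrict_J0 M (ws ! i) a)"
    unfolding f restrict_J0_def by (auto simp: fun_eq_iff sum_list_sum_nth atLeast0LessThan)
  then have "prod_Q_minus g j cs (restrict_J0 M f) =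
      (\<lambda>a. \<Sum>i<length ws. prod_Q_minus g j cs (restrict_J0 M (ws ! i)) a)"
    by (simp add: prod_Q_minus_sum)
  also have "\<dots> = (\<lambda>_. 0)"
  proof (intro ext sum.neutral ballI)
    fix a i assume "i \<in> {..<length ws}"
    then obtain c where "ws ! i \<in> tens_space g e" "Q_op g j (ws ! i) = (\<lambda>a. c * (ws ! i) a)"
      using ws by (meson lessThan_iff nth_mem)
    with cs show "prod_Q_minus g j cs (restrict_J0 M (ws ! i)) a = 0"
      unfolding g_def by (simp add: prod_Q_minus_restrict_J0_eigenvector)
  qed
  finally show ?thesis .
qed

lemma not_diagonalisable_if_not_inj:
  fixes d :: nat
  defines "g \<equiv> real d / 2"
  assumes j: "2 * j \<in> \<int>" "j - e \<notin> \<int>" and not_inj: "\<not> inj_on (Q_eigenvalue g j) {..<Suc d}"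
  shows "\<not> diagonalisable_on (tens_space g e) (Q_op g j)"
proof
  define M where "M = e + g"
  define e0 where "e0 = basis_vec (vm_point g M 0)"
  define cs where "cs = remdups (map (Q_eigenvalue g j) [0..<Suc d])"
  have "e0 \<in> tens_space g e"
    unfolding e0_def g_def
    by (rule supported_first_in_tens_space[where M = M]) (simp_all add: M_def g_def supported_first_basis_vec)
  moreover assume "diagonalisable_on (tens_space g e) (Q_op g j)"
  ultimately have "eigen_decomposable (tens_space g e) (Q_op g j) e0"
    unfolding diagonalisable_on_iff by blast
  moreover have "Q_eigenvalue g j ` {..<Suc d} \<subseteq> set cs"
    unfolding cs_def by (auto simp del: upt_Suc)
  moreover have "restrict_J0 M e0 = e0"
    by (auto simp: fun_eq_iff e0_def restrict_J0_def basis_vec_def vm_point_def)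
  ultimately have "prod_Q_minus g j cs e0 (vm_point g M (length cs)) = 0"
    unfolding g_def by (metis prod_Q_minus_restrict_J0_eigen_decomposable)
  moreover have "length cs \<le> d"
    using length_remdups_map_upt_less[OF not_inj] unfolding cs_def by simp
  then have "prod_Q_minus g j cs e0 (vm_point g M (length cs)) \<noteq> 0"
    unfolding e0_def g_def M_def
    using prod_Q_minus_lowest_weight Gam_lowest_weight_chain_neq_0[OF j] by blast
  ultimately show False
    by contradiction
qed

theorem mainTheorem8:
  fixes \<gamma> \<epsilon> j :: real
  assumes "\<exists>d::nat. d \<ge> 1 \<and> \<gamma> = real d / 2"
    and "\<epsilon> = 0 \<or> \<epsilon> = 1/2"
    and "2 * j \<in> \<int>"
    and "j - \<epsilon> \<notin> \<int>"
  shows "(\<forall>M. M - \<epsilon> - \<gamma> \<in> \<int> \<longrightarrow>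
            char_poly (Q_mat_VM \<gamma> j M) =
              (\<Prod>k<fdim \<gamma>. [: - complex_of_real (- (j + wt \<gamma> k) * (j + wt \<gamma> k + 1)), 1 :]))
       \<and> (diagonalisable_on (tens_space \<gamma> \<epsilon>) (Q_op \<gamma> j) \<longleftrightarrow> j > \<gamma> - 1 \<or> j < - \<gamma>)"
proof -
  obtain d :: nat where \<gamma>: "\<gamma> = real d / 2"
    using assms(1) by blast
  have "char_poly (Q_mat_VM \<gamma> j M) =
      (\<Prod>k<fdim \<gamma>. [: - complex_of_real (- (j + wt \<gamma> k) * (j + wt \<gamma> k + 1)), 1 :])" for M
    unfolding \<gamma> char_poly_Q_mat_VM Q_eigenvalue_def by simp
  moreover have "diagonalisable_on (tens_space \<gamma> \<epsilon>) (Q_op \<gamma> j) \<longleftrightarrow> inj_on (Q_eigenvalue \<gamma> j) {..<Suc d}"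
    using diagonalisable_if_inj not_diagonalisable_if_not_inj[OF assms(3,4)] unfolding \<gamma> by blast
  ultimately show ?thesis
    using inj_on_Q_eigenvalue_iff[OF assms(3), of d] unfolding \<gamma> by simp
qed

end
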